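(* If $f\ge 0$ is a random variable, then its quantization $\widehat f$ is a positive operator on $H$, i.e. $\langle\widehat f u,u\rangle\ge 0$ for all $u\in H$.
   Context: $(\Omega,\mathcal{A},\nu)$ is a probability space and $H=L_2(\Omega,\mathcal{A},\nu)$ is the complex Hilbert space with inner product $\langle f,g\rangle=\int\bar f g\,d\nu$. A random variable is a real-valued $f\in H$. For a random variable $f\ge 0$, its quantization $\widehat f$ is the operator on $H$ given by $(\widehat f u)(y)=\int\min[f(x),f(y)]\,u(x)\,d\nu(x)$. *)

theory Defs
  imports "HOL-Probability.Probability" "HOL-Library.Complex_Order"
begin

text \<open>The complex Hilbert space H = L2(Omega, A, nu), represented by its
  (measurable, square-integrable) representative functions.\<close>
definition L2 :: "'a measure \<Rightarrow> ('a \<Rightarrow> complex) set" where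
  "L2 M = {u. u \<in> borel_measurable M \<and> integrable M (\<lambda>x. (cmod (u x))\<^sup>2)}"

definition l2_inner :: "'a measure \<Rightarrow> ('a \<Rightarrow> complex) \<Rightarrow> ('a \<Rightarrow> complex) \<Rightarrow> complex" where
  "l2_inner M u v = (LINT x|M. cnj (u x) * v x)"

definition quantization :: "'a measure \<Rightarrow> ('a \<Rightarrow> real) \<Rightarrow> ('a \<Rightarrow> complex) \<Rightarrow> ('a \<Rightarrow> complex)" where
  "quantization M f u = (\<lambda>y. LINT x|M. complex_of_real (min (f x) (f y)) * u x)"

end

theory Submission
  imports Defs
begin

(* A nonnegative number is the length of an interval:
     min a b = \<integral> 1[0,a)(t) 1[0,b)(t) dt     for a, b \<ge> 0.
   Hence the kernel min (f x) (f y) of the quantization is a superposition over the levels t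
   of the rank-one kernels 1[t < f x] 1[t < f y], and by Fubini
     <quantization f u, u> = \<integral> |F t|^2 dt \<ge> 0,   where F t = \<integral> 1[t < f y] u(y) d\<nu>(y).
   The file first proves the general fact behind this (kernel_form_superposition): for a
   kernel K(x,y) = \<integral> \<phi>(x,t) \<phi>(y,t) dN(t), the quadratic form \<integral>\<integral> K(x,y) conj(u x) u(y)
   equals \<integral> |\<integral> \<phi>(y,t) u(y) dM(y)|^2 dN(t), built on Fubini for tensor products.  After
   the integrability bookkeeping for L2 functions on a finite measure space, it is
   instantiated with \<phi>(x,t) = 1[0, g x)(t) and Lebesgue measure for an everywhere
   nonnegative g (l2_inner_quantization_layers).  Finally, the quadratic form depends on f
   only up to null sets (l2_inner_quantization_AE_cong), so f may be replaced by max 0 f. *)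

lemma borel_measurable_cnj_comp[measurable (raw)]:
  fixes g :: "'a \<Rightarrow> complex"
  assumes "g \<in> borel_measurable M"
  shows "(\<lambda>x. cnj (g x)) \<in> borel_measurable M"
proof -
  have "cnj \<in> borel_measurable borel"
    by (rule borel_measurable_continuous_onI) (intro continuous_intros)
  from measurable_compose[OF assms this] show ?thesis by (simp add: comp_def)
qed

lemma tensor_product_integral:
  fixes g h :: "_ \<Rightarrow> 'b::{real_normed_field, banach, second_countable_topology}"
  assumes "sigma_finite_measure M1" "sigma_finite_measure M2"
    and g: "integrable M1 g" and h: "integrable M2 h"
  shows "integrable (M1 \<Otimes>\<^sub>M M2) (\<lambda>(x,y). g x * h y)"
    and "integral\<^sup>L (M1 \<Otimes>\<^sub>M M2) (\<lambda>(x,y). g x * h y) = integral\<^sup>L M1 g * integral\<^sup>L M2 h"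
proof -
  interpret pair_sigma_finite M1 M2 using assms(1,2) by (simp add: pair_sigma_finite_def)
  have [measurable]: "g \<in> borel_measurable M1" "h \<in> borel_measurable M2" using g h by auto
  show int: "integrable (M1 \<Otimes>\<^sub>M M2) (\<lambda>(x,y). g x * h y)"
  proof (rule Fubini_integrable)
    show "(\<lambda>(x,y). g x * h y) \<in> borel_measurable (M1 \<Otimes>\<^sub>M M2)" by measurable
    have "integrable M1 (\<lambda>x. norm (g x) * (\<integral>y. norm (h y) \<partial>M2))"
      using g by (intro integrable_mult_left) auto
    then show "integrable M1 (\<lambda>x. \<integral>y. norm (case (x, y) of (x, y) \<Rightarrow> g x * h y) \<partial>M2)"
      by (simp add: norm_mult)
    show "AE x in M1. integrable M2 (\<lambda>y. case (x, y) of (x, y) \<Rightarrow> g x * h y)"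
      using h by auto
  qed
  have "integral\<^sup>L (M1 \<Otimes>\<^sub>M M2) (\<lambda>(x,y). g x * h y) = (\<integral>x. (\<integral>y. g x * h y \<partial>M2) \<partial>M1)"
    using integral_fst[of "\<lambda>x y. g x * h y"] int by simp
  then show "integral\<^sup>L (M1 \<Otimes>\<^sub>M M2) (\<lambda>(x,y). g x * h y) = integral\<^sup>L M1 g * integral\<^sup>L M2 h"
    by simp
qed

text \<open>The special case conj(h x) h(y): the double integral is the squared modulus of \<integral>h.
  This is the positivity of each rank-one kernel in the superposition.\<close>
lemma integral_pair_cnj_mult:
  fixes h :: "'a \<Rightarrow> complex"
  assumes "sigma_finite_measure M" and h: "integrable M h"
  shows "integral\<^sup>L (M \<Otimes>\<^sub>M M) (\<lambda>(x,y). cnj (h x) * h y) = complex_of_real ((cmod (integral\<^sup>L M h))\<^sup>2)"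
proof -
  have "integral\<^sup>L (M \<Otimes>\<^sub>M M) (\<lambda>(x,y). cnj (h x) * h y) = cnj (integral\<^sup>L M h) * integral\<^sup>L M h"
    using tensor_product_integral(2)[OF assms(1,1) integrable_cnj[OF h] h] by simp
  then show ?thesis
    using complex_norm_square[of "integral\<^sup>L M h"] by (simp add: mult.commute)
qed

lemma L2_integrable_norm:
  assumes "finite_measure M" and u: "u \<in> L2 M"
  shows "integrable M (\<lambda>x. cmod (u x))"
proof (rule Bochner_Integration.integrable_bound[where f="\<lambda>x. 1 + (cmod (u x))\<^sup>2"])
  interpret finite_measure M by fact
  show "integrable M (\<lambda>x. 1 + (cmod (u x))\<^sup>2)" using u by (simp add: L2_def)
  have [measurable]: "u \<in> borel_measurable M" using u by (simp add: L2_def)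
  show "(\<lambda>x. cmod (u x)) \<in> borel_measurable M" by measurable
  have "cmod z \<le> 1 + (cmod z)\<^sup>2" for z
    using sum_squares_bound[of 1 "cmod z"] norm_ge_zero[of z] by (simp, linarith)
  then show "AE x in M. norm (cmod (u x)) \<le> norm (1 + (cmod (u x))\<^sup>2)"
    by simp
qed

text \<open>Since 2ab \<le> a^2 + b^2, the product of two square-integrable functions is integrable.\<close>
lemma L2_integrable_abs_mult:
  assumes u: "u \<in> L2 M" and [measurable]: "f \<in> borel_measurable M"
    and f2: "integrable M (\<lambda>x. (f x)\<^sup>2)"
  shows "integrable M (\<lambda>x. \<bar>f x\<bar> * cmod (u x))"
proof (rule Bochner_Integration.integrable_bound[where f="\<lambda>x. (f x)\<^sup>2 + (cmod (u x))\<^sup>2"])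
  have [measurable]: "u \<in> borel_measurable M" using u by (simp add: L2_def)
  show "integrable M (\<lambda>x. (f x)\<^sup>2 + (cmod (u x))\<^sup>2)" using u f2 by (simp add: L2_def)
  show "(\<lambda>x. \<bar>f x\<bar> * cmod (u x)) \<in> borel_measurable M" by measurable
  have "\<bar>a\<bar> * b \<le> a\<^sup>2 + b\<^sup>2" if "0 \<le> b" for a b :: real
    using sum_squares_bound[of "\<bar>a\<bar>" b] mult_nonneg_nonneg[OF abs_ge_zero[of a] that]
    by (simp add: power2_abs)
  then show "AE x in M. norm (\<bar>f x\<bar> * cmod (u x)) \<le> norm ((f x)\<^sup>2 + (cmod (u x))\<^sup>2)"
    by simp
qed

text \<open>The hypotheses are exactly what Fubini's theorem on (M \<times> M) \<times> N needs.\<close>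
lemma kernel_form_superposition:
  fixes \<phi> :: "'a \<Rightarrow> 'b \<Rightarrow> real" and u :: "'a \<Rightarrow> complex"
  assumes M: "sigma_finite_measure M" and N: "sigma_finite_measure N"
    and \<phi>_meas[measurable]: "(\<lambda>(x,t). \<phi> x t) \<in> borel_measurable (M \<Otimes>\<^sub>M N)"
    and [measurable]: "u \<in> borel_measurable M"
    and slices: "\<And>x y. integrable N (\<lambda>t. \<phi> x t * \<phi> y t)"
    and layers: "\<And>t. integrable M (\<lambda>y. complex_of_real (\<phi> y t) * u y)"
    and kernel: "integrable (M \<Otimes>\<^sub>M M)
      (\<lambda>(x,y). (\<integral>t. \<bar>\<phi> x t * \<phi> y t\<bar> \<partial>N) * (cmod (u x) * cmod (u y)))"
  shows "(\<integral>y. (\<integral>x. complex_of_real (\<integral>t. \<phi> x t * \<phi> y t \<partial>N) * cnj (u x) * u y \<partial>M) \<partial>M)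
       = complex_of_real (\<integral>t. (cmod (\<integral>y. complex_of_real (\<phi> y t) * u y \<partial>M))\<^sup>2 \<partial>N)"
proof -
  interpret MM: pair_sigma_finite M M using M by (simp add: pair_sigma_finite_def)
  interpret MMN: pair_sigma_finite "M \<Otimes>\<^sub>M M" N
    using sigma_finite_pair_measure[OF M M] N by (simp add: pair_sigma_finite_def)
  define G where "G p t = complex_of_real (\<phi> (fst p) t * \<phi> (snd p) t) * (cnj (u (fst p)) * u (snd p))"
    for p t
  have [measurable]: "(\<lambda>(p,t). \<phi> (fst p) t) \<in> borel_measurable ((M \<Otimes>\<^sub>M M) \<Otimes>\<^sub>M N)"
    "(\<lambda>(p,t). \<phi> (snd p) t) \<in> borel_measurable ((M \<Otimes>\<^sub>M M) \<Otimes>\<^sub>M N)"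
    using measurable_compose[OF _ \<phi>_meas, of "\<lambda>(p,t). (fst p, t)"]
      measurable_compose[OF _ \<phi>_meas, of "\<lambda>(p,t). (snd p, t)"]
    by (simp_all add: case_prod_beta')
  have G_int: "integrable ((M \<Otimes>\<^sub>M M) \<Otimes>\<^sub>M N) (\<lambda>(p,t). G p t)"
  proof (rule MMN.Fubini_integrable)
    show "(\<lambda>(p,t). G p t) \<in> borel_measurable ((M \<Otimes>\<^sub>M M) \<Otimes>\<^sub>M N)"
      unfolding G_def by measurable
    have "(\<integral>t. norm (G p t) \<partial>N)
        = (\<integral>t. \<bar>\<phi> (fst p) t * \<phi> (snd p) t\<bar> \<partial>N) * (cmod (u (fst p)) * cmod (u (snd p)))" for p
      by (simp add: G_def norm_mult abs_mult)
    then show "integrable (M \<Otimes>\<^sub>M M) (\<lambda>p. \<integral>t. norm (case (p, t) of (p, t) \<Rightarrow> G p t) \<partial>N)"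
      using kernel by (simp add: case_prod_beta')
    show "AE p in M \<Otimes>\<^sub>M M. integrable N (\<lambda>t. case (p, t) of (p, t) \<Rightarrow> G p t)"
    proof (rule AE_I2)
      fix p
      have "integrable N (\<lambda>t. complex_of_real (\<phi> (fst p) t * \<phi> (snd p) t) * (cnj (u (fst p)) * u (snd p)))"
        by (intro integrable_mult_left integrable_of_real slices)
      then show "integrable N (\<lambda>t. case (p, t) of (p, t) \<Rightarrow> G p t)" by (simp add: G_def)
    qed
  qed
  have kernel_eq: "(\<integral>t. G (x,y) t \<partial>N)
      = complex_of_real (\<integral>t. \<phi> x t * \<phi> y t \<partial>N) * cnj (u x) * u y" for x y
    unfolding G_def fst_conv snd_conv integral_mult_left_zero integral_complex_of_real
    by (simp only: mult.assoc)
  have layer_eq: "(\<integral>p. G p t \<partial>(M \<Otimes>\<^sub>M M))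
      = complex_of_real ((cmod (\<integral>y. complex_of_real (\<phi> y t) * u y \<partial>M))\<^sup>2)" for t
  proof -
    have "(\<integral>p. G p t \<partial>(M \<Otimes>\<^sub>M M)) = integral\<^sup>L (M \<Otimes>\<^sub>M M)
        (\<lambda>(x,y). cnj (complex_of_real (\<phi> x t) * u x) * (complex_of_real (\<phi> y t) * u y))"
      by (intro Bochner_Integration.integral_cong) (auto simp: G_def mult_ac)
    then show ?thesis using integral_pair_cnj_mult[OF M layers] by simp
  qed
  have "(\<integral>y. (\<integral>x. complex_of_real (\<integral>t. \<phi> x t * \<phi> y t \<partial>N) * cnj (u x) * u y \<partial>M) \<partial>M)
      = (\<integral>y. (\<integral>x. (\<integral>t. G (x,y) t \<partial>N) \<partial>M) \<partial>M)"
    by (simp only: kernel_eq)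
  also have "\<dots> = (\<integral>p. (\<integral>t. G p t \<partial>N) \<partial>(M \<Otimes>\<^sub>M M))"
    using MM.integral_snd[of "\<lambda>x y. \<integral>t. G (x,y) t \<partial>N"] MMN.integrable_fst'[OF G_int]
    by (simp add: case_prod_beta')
  also have "\<dots> = (\<integral>t. (\<integral>p. G p t \<partial>(M \<Otimes>\<^sub>M M)) \<partial>N)"
    using MMN.Fubini_integral[of "\<lambda>p t. G p t"] G_int by simp
  also have "\<dots> = complex_of_real (\<integral>t. (cmod (\<integral>y. complex_of_real (\<phi> y t) * u y \<partial>M))\<^sup>2 \<partial>N)"
    by (simp only: layer_eq integral_complex_of_real)
  finally show ?thesis .
qed

lemma indicator_Ico_mult:
  fixes a b t :: real
  shows "indicator {0..<a} t * indicator {0..<b} t = (indicator {0..<min a b} t :: real)"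
  by (auto simp: indicator_def min_def)

lemma min_eq_integral_indicator:
  fixes a b :: real
  assumes "0 \<le> a" "0 \<le> b"
  shows "(\<integral>t. indicator {0..<a} t * indicator {0..<b} t \<partial>lborel) = min a b"
  using assms by (simp add: indicator_Ico_mult)

lemma l2_inner_quantization:
  "l2_inner M (quantization M f u) u
     = (\<integral>y. (\<integral>x. complex_of_real (min (f x) (f y)) * cnj (u x) * u y \<partial>M) \<partial>M)"
proof -
  have "cnj (\<integral>x. complex_of_real (min (f x) (f y)) * u x \<partial>M) * u y
      = (\<integral>x. complex_of_real (min (f x) (f y)) * cnj (u x) * u y \<partial>M)" for y
  proof -
    have "(\<integral>x. complex_of_real (min (f x) (f y)) * cnj (u x) * u y \<partial>M)
        = (\<integral>x. cnj (complex_of_real (min (f x) (f y)) * u x) \<partial>M) * u y"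
      by (simp only: integral_mult_left_zero complex_cnj_mult complex_cnj_complex_of_real)
    then show ?thesis by (simp only: Bochner_Integration.integral_cnj)
  qed
  then show ?thesis
    unfolding l2_inner_def quantization_def by (intro Bochner_Integration.integral_cong refl)
qed

text \<open>The kernel min (f x) (f y) is dominated by |f x| + |f y|, so for square-integrable f
  the quadratic form of the quantization is absolutely convergent on M \<times> M.\<close>
lemma integrable_min_kernel:
  assumes "finite_measure M" and u: "u \<in> L2 M" and [measurable]: "f \<in> borel_measurable M"
    and f2: "integrable M (\<lambda>x. (f x)\<^sup>2)"
  shows "integrable (M \<Otimes>\<^sub>M M) (\<lambda>(x,y). \<bar>min (f x) (f y)\<bar> * (cmod (u x) * cmod (u y)))"
proof (rule Bochner_Integration.integrable_bound)
  have M: "sigma_finite_measure M"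
    using assms(1) by (simp add: finite_measure_def)
  have [measurable]: "u \<in> borel_measurable M" using u by (simp add: L2_def)
  have u1: "integrable M (\<lambda>x. cmod (u x))" by (rule L2_integrable_norm[OF assms(1) u])
  have fu: "integrable M (\<lambda>x. \<bar>f x\<bar> * cmod (u x))" by (rule L2_integrable_abs_mult[OF u _ f2]) simp
  show "integrable (M \<Otimes>\<^sub>M M) (\<lambda>p. (\<lambda>(x,y). (\<bar>f x\<bar> * cmod (u x)) * cmod (u y)) p
                                   + (\<lambda>(x,y). cmod (u x) * (\<bar>f y\<bar> * cmod (u y))) p)"
    by (intro Bochner_Integration.integrable_add tensor_product_integral(1) M fu u1)
  show "(\<lambda>(x,y). \<bar>min (f x) (f y)\<bar> * (cmod (u x) * cmod (u y))) \<in> borel_measurable (M \<Otimes>\<^sub>M M)"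
    by measurable
  have bound: "\<bar>min a b\<bar> * (c * d) \<le> \<bar>a\<bar> * c * d + c * (\<bar>b\<bar> * d)"
    if "0 \<le> c" "0 \<le> d" for a b c d :: real
  proof -
    have "\<bar>min a b\<bar> * (c * d) \<le> (\<bar>a\<bar> + \<bar>b\<bar>) * (c * d)"
      using that by (intro mult_right_mono) auto
    then show ?thesis by (simp add: algebra_simps)
  qed
  then show "AE p in M \<Otimes>\<^sub>M M. norm ((\<lambda>(x,y). \<bar>min (f x) (f y)\<bar> * (cmod (u x) * cmod (u y))) p)
      \<le> norm ((\<lambda>(x,y). (\<bar>f x\<bar> * cmod (u x)) * cmod (u y)) p
              + (\<lambda>(x,y). cmod (u x) * (\<bar>f y\<bar> * cmod (u y))) p)"
    by (intro AE_I2) (auto intro!: bound)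
qed

text \<open>For everywhere nonnegative g, the quadratic form of the quantization is the integral over
  the levels t of |\<integral> 1[t < g y] u(y) dM(y)| squared: the superposition lemma with
  \<phi>(x,t) = 1[0, g x)(t) and Lebesgue measure on the levels.\<close>
lemma l2_inner_quantization_layers:
  assumes "finite_measure M" and u: "u \<in> L2 M" and [measurable]: "g \<in> borel_measurable M"
    and g2: "integrable M (\<lambda>x. (g x)\<^sup>2)" and g_nonneg: "\<And>x. 0 \<le> g x"
  shows "l2_inner M (quantization M g u) u
     = complex_of_real (\<integral>t. (cmod (\<integral>y. complex_of_real (indicator {0..<g y} t) * u y \<partial>M))\<^sup>2 \<partial>lborel)"
proof -
  have M: "sigma_finite_measure M"
    using assms(1) by (simp add: finite_measure_def)
  have [measurable]: "u \<in> borel_measurable M" using u by (simp add: L2_def)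
  have kernel: "min (g x) (g y) = (\<integral>t. indicator {0..<g x} t * indicator {0..<g y} t \<partial>lborel)"
    for x y using min_eq_integral_indicator g_nonneg by simp
  have "l2_inner M (quantization M g u) u = (\<integral>y. (\<integral>x. complex_of_real
      (\<integral>t. indicator {0..<g x} t * indicator {0..<g y} t \<partial>lborel) * cnj (u x) * u y \<partial>M) \<partial>M)"
    by (simp only: l2_inner_quantization kernel)
  also have "\<dots> = complex_of_real
      (\<integral>t. (cmod (\<integral>y. complex_of_real (indicator {0..<g y} t) * u y \<partial>M))\<^sup>2 \<partial>lborel)"
  proof (rule kernel_form_superposition[OF M lborel.sigma_finite_measure_axioms])
    show "(\<lambda>(x,t). indicator {0..<g x} t :: real) \<in> borel_measurable (M \<Otimes>\<^sub>M lborel)"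
      unfolding indicator_def atLeastLessThan_iff by measurable
    show "u \<in> borel_measurable M" by measurable
    show "integrable lborel (\<lambda>t. indicator {0..<g x} t * indicator {0..<g y} t :: real)" for x y
      using g_nonneg[of x] g_nonneg[of y] by (simp add: indicator_Ico_mult)
    show "integrable M (\<lambda>y. complex_of_real (indicator {0..<g y} t) * u y)" for t
    proof (rule Bochner_Integration.integrable_bound)
      show "integrable M (\<lambda>y. cmod (u y))" by (rule L2_integrable_norm[OF assms(1) u])
      show "(\<lambda>y. complex_of_real (indicator {0..<g y} t) * u y) \<in> borel_measurable M"
        unfolding indicator_def atLeastLessThan_iff by measurable
      show "AE y in M. norm (complex_of_real (indicator {0..<g y} t) * u y) \<le> norm (cmod (u y))"
        by (intro AE_I2) (simp add: indicator_def norm_mult)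
    qed
    have "(\<integral>t. \<bar>indicator {0..<g x} t * indicator {0..<g y} t :: real\<bar> \<partial>lborel) = \<bar>min (g x) (g y)\<bar>"
      for x y using kernel g_nonneg by simp
    then show "integrable (M \<Otimes>\<^sub>M M) (\<lambda>(x,y).
        (\<integral>t. \<bar>indicator {0..<g x} t * indicator {0..<g y} t :: real\<bar> \<partial>lborel) * (cmod (u x) * cmod (u y)))"
      using integrable_min_kernel[OF assms(1) u _ g2] by simp
  qed
  finally show ?thesis .
qed

lemma l2_inner_quantization_AE_cong:
  assumes "sigma_finite_measure M" and [measurable]: "f \<in> borel_measurable M" "g \<in> borel_measurable M"
    "u \<in> borel_measurable M" and fg: "AE x in M. f x = g x"
  shows "l2_inner M (quantization M f u) u = l2_inner M (quantization M g u) u"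
proof -
  interpret sigma_finite_measure M by fact
  have "AE y in M. quantization M f u y = quantization M g u y"
    using fg
  proof eventually_elim
    case (elim y)
    from fg have "AE x in M. complex_of_real (min (f x) (f y)) * u x = complex_of_real (min (g x) (g y)) * u x"
      by eventually_elim (simp add: elim)
    then show ?case unfolding quantization_def by (intro integral_cong_AE) measurable
  qed
  then show ?thesis
    unfolding l2_inner_def by (intro integral_cong_AE) (auto simp: quantization_def)
qed

theorem theorem3p2:
  fixes M :: "'a measure" and f :: "'a \<Rightarrow> real"
  assumes "prob_space M"
    and "f \<in> borel_measurable M"
    and "integrable M (\<lambda>x. (f x)\<^sup>2)"
    and "AE x in M. f x \<ge> 0"
  shows "\<forall>u \<in> L2 M. l2_inner M (quantization M f u) u \<ge> 0"
proof
  fix u assume u: "u \<in> L2 M"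
  interpret prob_space M by fact
  define g where "g x = max 0 (f x)" for x
  have [measurable]: "f \<in> borel_measurable M" by fact
  have g_meas[measurable]: "g \<in> borel_measurable M" unfolding g_def by measurable
  have g2: "integrable M (\<lambda>x. (g x)\<^sup>2)"
    by (rule Bochner_Integration.integrable_bound[OF assms(3)]) (auto simp: g_def max_def)
  have "AE x in M. f x = g x" using assms(4) by eventually_elim (simp add: g_def)
  then have "l2_inner M (quantization M f u) u = l2_inner M (quantization M g u) u"
    using u by (intro l2_inner_quantization_AE_cong sigma_finite_measure_axioms) (auto simp: L2_def)
  also have "\<dots> = complex_of_real
      (\<integral>t. (cmod (\<integral>y. complex_of_real (indicator {0..<g y} t) * u y \<partial>M))\<^sup>2 \<partial>lborel)"
    by (rule l2_inner_quantization_layers[OF finite_measure_axioms u g_meas g2]) (simp add: g_def)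
  finally show "l2_inner M (quantization M f u) u \<ge> 0"
    by (simp add: less_eq_complex_def)
qed

end
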